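(* Let $d\geq1$, $T\geq2$, and let $x^0,x^1\in(\mathbb{R}^d)^T$ satisfy $x^0_{t,j}\neq x^1_{t,j}$ for all $1\le t\le T$, $1\le j\le d$. Let $D:=\prod_{t=1}^T\prod_{j=1}^d\{x^0_{t,j},x^1_{t,j}\}\subseteq(\mathbb{R}^d)^T$. Let $V,V^{(n)}:D\to\mathbb{R}$, $n\in\mathbb{N}$, and real-valued functions $\hat h_{t,j},\hat g_j$ and $\hat h^{(n)}_{t,j},\hat g^{(n)}_j$ be such that for all $x=(x_{t,j})\in D$, $V(x)=\sum_{t=1}^{T-1}\sum_{j=1}^d\hat h_{t,j}(x_1,\dots,x_t)(x_{t+1,j}-x_{t,j})+\sum_{j=1}^d\hat g_j(x_{T,j})$, and similarly for $V^{(n)}$ with $\hat h^{(n)}_{t,j},\hat g^{(n)}_j$, and such that $\hat g_j(x^0_{T,j})=\hat g^{(n)}_j(x^0_{T,j})=0$ for $j=2,\dots,d$ and all $n$. Then the values $\hat h_{t,j}(x_1,\dots,x_t)$ and $\hat g_j(x_{T,j})$ for $x\in D$ are uniquely determined by $V$. Moreover, if $V^{(n)}\to V$ pointwise on $D$, then $\hat h^{(n)}_{t,j}(x_1,\dots,x_t)\to\hat h_{t,j}(x_1,\dots,x_t)$ and $\hat g^{(n)}_j(x_{T,j})\to\hat g_j(x_{T,j})$ for all $x\in D$ and all $t,j$.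
   Context: Here $x_t=(x_{t,1},\dots,x_{t,d})\in\mathbb{R}^d$ denotes the $t$-th block of $x\in(\mathbb{R}^d)^T$. *)

theory Defs
  imports "HOL-Analysis.Analysis"
begin

text \<open>A point x of (R^d)^T is represented as a function x :: nat => nat => real,
  where x t j is the coordinate x_{t,j} for 1 <= t <= T, 1 <= j <= d; outside
  this index range the value is fixed to 0 (extensional representation).\<close>

type_synonym point = "nat \<Rightarrow> nat \<Rightarrow> real"

definition grid :: "nat \<Rightarrow> nat \<Rightarrow> point \<Rightarrow> point \<Rightarrow> point set" where
  "grid T d x0 x1 = {x. (\<forall>t j. (1 \<le> t \<and> t \<le> T \<and> 1 \<le> j \<and> j \<le> d \<longrightarrow> x t j \<in> {x0 t j, x1 t j})
                          \<and> (\<not>(1 \<le> t \<and> t \<le> T \<and> 1 \<le> j \<and> j \<le> d) \<longrightarrow> x t j = 0))}"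

definition prefix :: "nat \<Rightarrow> nat \<Rightarrow> point \<Rightarrow> point" where
  "prefix d t x = (\<lambda>s j. if 1 \<le> s \<and> s \<le> t \<and> 1 \<le> j \<and> j \<le> d then x s j else 0)"

definition repr :: "nat \<Rightarrow> nat \<Rightarrow> (nat \<Rightarrow> nat \<Rightarrow> point \<Rightarrow> real) \<Rightarrow> (nat \<Rightarrow> real \<Rightarrow> real) \<Rightarrow> point \<Rightarrow> real" where
  "repr T d h g x = (\<Sum>t=1..T-1. \<Sum>j=1..d. h t j (prefix d t x) * (x (t+1) j - x t j))
                    + (\<Sum>j=1..d. g j (x T j))"

end

theory Submission
  imports Defs
begin

(* Subtracting representations reduces both claims to: if repr (H n) (G n) tends to 0 pointwise
   on the grid, then so do all coefficients.  Flipping the single coordinate x_{u,j} changes V by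
   h_{u-1,j}(x_1..x_{u-1}) times the (nonzero) jump, plus changes of the later terms.  Comparing
   the flip of x with the flip of a point that agrees with x only in block T isolates h_{T-1,j}
   up to its value c_j at x0 (the anchor).  Since adding c_j to every h_{s,j} only changes V by
   c_j (x_{T,j} - x_{1,j}), a backward induction over the blocks then controls each h_{s,j} - c_j,
   and flipping a coordinate of the first block shows c_j -> 0.  Finally g_j is read off from a
   flip of block T together with g_j(x0_{T,j}) = 0 for j >= 2, and g_1 from V itself. *)

lemma sum_diff_single_change:
  fixes f :: "'a \<Rightarrow> 'b \<Rightarrow> 'c::ab_group_add"
  assumes "finite A" "j \<in> A" "\<And>i. i \<in> A \<Longrightarrow> i \<noteq> j \<Longrightarrow> y i = z i"
  shows "(\<Sum>i\<in>A. f i (y i)) - (\<Sum>i\<in>A. f i (z i)) = f j (y j) - f j (z j)"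
  using assms by (simp add: sum.remove)

lemma prefix_prefix: "s \<le> u \<Longrightarrow> prefix d s (prefix d u x) = prefix d s x"
  by (auto simp: prefix_def intro!: ext)

lemma prefix_fun_upd: "s < u \<Longrightarrow> prefix d s (x(u := r)) = prefix d s x"
  by (auto simp: prefix_def intro!: ext)

definition flip :: "point \<Rightarrow> point \<Rightarrow> nat \<Rightarrow> nat \<Rightarrow> point \<Rightarrow> point" where
  "flip x0 x1 u j x = x(u := (x u)(j := if x u j = x0 u j then x1 u j else x0 u j))"

lemma flip_in_grid:
  "x \<in> grid T d x0 x1 \<Longrightarrow> 1 \<le> u \<Longrightarrow> u \<le> T \<Longrightarrow> 1 \<le> j \<Longrightarrow> j \<le> d
    \<Longrightarrow> flip x0 x1 u j x \<in> grid T d x0 x1"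
  unfolding grid_def flip_def by auto

lemma flip_changes:
  "x u j \<in> {x0 u j, x1 u j} \<Longrightarrow> x0 u j \<noteq> x1 u j \<Longrightarrow> flip x0 x1 u j x u j \<noteq> x u j"
  unfolding flip_def by auto

lemma flip_hits_x0: "x u j = x0 u j \<or> flip x0 x1 u j x u j = x0 u j"
  unfolding flip_def by auto

definition gains :: "nat \<Rightarrow> nat set \<Rightarrow> (nat \<Rightarrow> nat \<Rightarrow> point \<Rightarrow> real) \<Rightarrow> point \<Rightarrow> real" where
  "gains d S h x = (\<Sum>s\<in>S. \<Sum>j=1..d. h s j (prefix d s x) * (x (s+1) j - x s j))"

lemma repr_eq_gains: "repr T d h g x = gains d {1..T-1} h x + (\<Sum>j=1..d. g j (x T j))"
  by (simp add: repr_def gains_def)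

lemma gains_fun_upd_later:
  assumes "\<And>s. s \<in> S \<Longrightarrow> s + 1 < u"
  shows "gains d S h (x(u := r)) = gains d S h x"
  unfolding gains_def
proof (intro sum.cong refl)
  fix s i assume "s \<in> S"
  then have "s + 1 < u" by (rule assms)
  then show "h s i (prefix d s (x(u := r))) * ((x(u := r)) (s+1) i - (x(u := r)) s i)
      = h s i (prefix d s x) * (x (s+1) i - x s i)"
    by (simp add: prefix_fun_upd)
qed

lemma gains_split:
  assumes "2 \<le> u" "u \<le> T"
  shows "gains d {1..T-1} h x = gains d {1..<u-1} h x + gains d {u-1} h x + gains d {u..T-1} h x"
proof -
  have "{1..T-1} = ({1..<u-1} \<union> {u-1}) \<union> {u..T-1}" using assms by auto
  moreover have "sum f (({1..<u-1} \<union> {u-1}) \<union> {u..T-1}) = sum f {1..<u-1} + sum f {u-1} + sum f {u..T-1}"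
    for f :: "nat \<Rightarrow> real"
    using assms by (subst sum.union_disjoint; (subst sum.union_disjoint)?) auto
  ultimately show ?thesis unfolding gains_def by presburger
qed

lemma repr_fun_upd_diff:
  fixes x :: point and u j :: nat and v :: real
  defines "x' \<equiv> x(u := (x u)(j := v))"
  assumes "1 \<le> u" "u \<le> T" "1 \<le> j" "j \<le> d"
  shows "repr T d h g x' - repr T d h g x
    = (if 2 \<le> u then h (u-1) j (prefix d (u-1) x) * (v - x u j) else 0)
      + (gains d {u..T-1} h x' - gains d {u..T-1} h x) + (g j (x' T j) - g j (x T j))"
proof -
  have g: "(\<Sum>i=1..d. g i (x' T i)) - (\<Sum>i=1..d. g i (x T i)) = g j (x' T j) - g j (x T j)"
    using assms by (intro sum_diff_single_change) (auto simp: x'_def)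
  show ?thesis
  proof (cases "2 \<le> u")
    case True
    define p where "p = prefix d (u-1) x"
    have single: "gains d {u-1} h y = (\<Sum>i=1..d. h (u-1) i p * (y u i - x (u-1) i))"
      if "prefix d (u-1) y = p" "y (u-1) = x (u-1)" for y
      using True that by (simp add: gains_def)
    have "gains d {u-1} h x' = (\<Sum>i=1..d. h (u-1) i p * (x' u i - x (u-1) i))"
      by (rule single) (use True in \<open>auto simp: x'_def p_def prefix_fun_upd\<close>)
    moreover have "gains d {u-1} h x = (\<Sum>i=1..d. h (u-1) i p * (x u i - x (u-1) i))"
      by (rule single) (auto simp: p_def)
    ultimately have "gains d {u-1} h x' - gains d {u-1} h x = h (u-1) j p * (x' u j - x u j)"
      using assms by (simp, subst sum_diff_single_change) (auto simp: x'_def algebra_simps)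
    moreover have "gains d {1..<u-1} h x' = gains d {1..<u-1} h x"
      unfolding x'_def by (rule gains_fun_upd_later) auto
    moreover have "x' u j = v" by (simp add: x'_def)
    ultimately show ?thesis
      using g unfolding repr_eq_gains gains_split[OF True \<open>u \<le> T\<close>] by (simp add: True p_def)
  next
    case False
    with \<open>1 \<le> u\<close> have "u = 1" by simp
    then show ?thesis using g unfolding repr_eq_gains by simp
  qed
qed

lemma gains_shift:
  assumes "1 \<le> u" "u \<le> T"
  shows "gains d {u..T-1} (\<lambda>s i p. h s i p - c i) x
    = gains d {u..T-1} h x - (\<Sum>i=1..d. c i * (x T i - x u i))"
proof -
  have "(\<Sum>s=u..T-1. \<Sum>i=1..d. c i * (x (s+1) i - x s i))
      = (\<Sum>i=1..d. c i * (\<Sum>s=u..T-1. x (s+1) i - x s i))"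
    by (simp add: sum_distrib_left) (rule sum.swap)
  also have "\<dots> = (\<Sum>i=1..d. c i * (x T i - x u i))"
  proof (intro sum.cong refl arg_cong[where f = "\<lambda>y. c _ * y"])
    fix i
    show "(\<Sum>s=u..T-1. x (s+1) i - x s i) = x T i - x u i"
      using sum_Suc_diff[of u "T-1" "\<lambda>s. x s i"] assms by simp
  qed
  finally show ?thesis
    unfolding gains_def by (simp add: left_diff_distrib sum_subtractf)
qed

lemma tendsto_diff_zero:
  fixes f g :: "'a \<Rightarrow> 'b::topological_group_add"
  shows "(f \<longlongrightarrow> 0) F \<Longrightarrow> (g \<longlongrightarrow> 0) F \<Longrightarrow> ((\<lambda>x. f x - g x) \<longlongrightarrow> 0) F"
  using tendsto_diff by fastforce

lemma gains_tendsto_zero: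
  assumes "finite S" "\<And>s i. s \<in> S \<Longrightarrow> 1 \<le> i \<Longrightarrow> i \<le> d \<Longrightarrow> (\<lambda>n. h n s i (prefix d s x)) \<longlonglongrightarrow> 0"
  shows "(\<lambda>n. gains d S (h n) x) \<longlonglongrightarrow> 0"
  unfolding gains_def using assms by (intro tendsto_null_sum tendsto_mult_left_zero) auto

lemma repr_diff:
  "repr T d (\<lambda>t j p. h t j p - h' t j p) (\<lambda>j y. g j y - g' j y) x = repr T d h g x - repr T d h' g' x"
  by (simp add: repr_def sum_subtractf left_diff_distrib)

lemma grid_fun_upd_block: "x \<in> grid T d x0 x1 \<Longrightarrow> y \<in> grid T d x0 x1 \<Longrightarrow> y(t := x t) \<in> grid T d x0 x1"
  unfolding grid_def by auto

lemma prefix_in_grid: "prefix d T x0 \<in> grid T d x0 x1"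
  unfolding grid_def prefix_def by auto

locale vanishing_representations =
  fixes T d :: nat and x0 x1 :: point
    and W :: "nat \<Rightarrow> point \<Rightarrow> real" and H :: "nat \<Rightarrow> nat \<Rightarrow> nat \<Rightarrow> point \<Rightarrow> real"
    and G :: "nat \<Rightarrow> nat \<Rightarrow> real \<Rightarrow> real"
  assumes d_pos: "1 \<le> d" and T_ge_2: "2 \<le> T"
    and distinct: "\<And>t j. 1 \<le> t \<Longrightarrow> t \<le> T \<Longrightarrow> 1 \<le> j \<Longrightarrow> j \<le> d \<Longrightarrow> x0 t j \<noteq> x1 t j"
    and W_repr: "\<And>n x. x \<in> grid T d x0 x1 \<Longrightarrow> W n x = repr T d (H n) (G n) x"
    and G_normalised: "\<And>n j. 2 \<le> j \<Longrightarrow> j \<le> d \<Longrightarrow> G n j (x0 T j) = 0"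
    and W_tendsto_zero: "\<And>x. x \<in> grid T d x0 x1 \<Longrightarrow> (\<lambda>n. W n x) \<longlonglongrightarrow> 0"
begin

abbreviation D :: "point set" where "D \<equiv> grid T d x0 x1"

lemma flip_diff_tendsto_zero:
  assumes "x \<in> D" "1 \<le> u" "u \<le> T" "1 \<le> j" "j \<le> d"
  shows "(\<lambda>n. W n (flip x0 x1 u j x) - W n x) \<longlonglongrightarrow> 0"
  using tendsto_diff[OF W_tendsto_zero[OF flip_in_grid[OF assms]] W_tendsto_zero[OF assms(1)]] by simp

lemma flip_step_nonzero:
  assumes "x \<in> D" "1 \<le> u" "u \<le> T" "1 \<le> j" "j \<le> d"
  shows "flip x0 x1 u j x u j - x u j \<noteq> 0"
  using assms flip_changes[of x u j x0 x1] distinct[of u j] unfolding grid_def by auto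

lemma W_flip_diff:
  assumes "x \<in> D" "1 \<le> u" "u \<le> T" "1 \<le> j" "j \<le> d"
  defines "x' \<equiv> flip x0 x1 u j x"
  shows "W n x' - W n x
    = (if 2 \<le> u then H n (u-1) j (prefix d (u-1) x) * (x' u j - x u j) else 0)
      + (gains d {u..T-1} (H n) x' - gains d {u..T-1} (H n) x) + (G n j (x' T j) - G n j (x T j))"
  using repr_fun_upd_diff[OF assms(2-5)] flip_in_grid[OF assms(1-5)] assms(1)
  unfolding x'_def flip_def by (simp add: W_repr)

definition anchor :: "nat \<Rightarrow> nat \<Rightarrow> real" where
  "anchor n i = H n (T-1) i (prefix d (T-1) x0)"

definition H_rel :: "nat \<Rightarrow> nat \<Rightarrow> nat \<Rightarrow> point \<Rightarrow> real" where
  "H_rel n s i p = H n s i p - anchor n i"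

lemma last_H_rel_tendsto_zero:
  assumes x: "x \<in> D" and j: "1 \<le> j" "j \<le> d"
  shows "(\<lambda>n. H_rel n (T-1) j (prefix d (T-1) x)) \<longlonglongrightarrow> 0"
proof -
  define y where "y = (prefix d T x0)(T := x T)"
  have y: "y \<in> D" unfolding y_def using x prefix_in_grid by (rule grid_fun_upd_block)
  have "prefix d (T-1) y = prefix d (T-1) x0"
    using T_ge_2 by (simp add: y_def prefix_fun_upd prefix_prefix)
  then have Hy: "H n (T-1) j (prefix d (T-1) y) = anchor n j" for n by (simp add: anchor_def)
  have same_T: "y T = x T" "flip x0 x1 T j y T = flip x0 x1 T j x T"
    by (simp_all add: y_def flip_def)
  define \<Delta> where "\<Delta> = flip x0 x1 T j x T j - x T j"
  have eq: "(W n (flip x0 x1 T j x) - W n x) - (W n (flip x0 x1 T j y) - W n y)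
      = H_rel n (T-1) j (prefix d (T-1) x) * \<Delta>" for n
    using W_flip_diff[OF x _ _ j, of T n] W_flip_diff[OF y _ _ j, of T n] T_ge_2
    unfolding Hy same_T by (simp add: gains_def H_rel_def \<Delta>_def algebra_simps)
  have "(\<lambda>n. W n (flip x0 x1 T j z) - W n z) \<longlonglongrightarrow> 0" if "z \<in> D" for z
    using T_ge_2 by (intro flip_diff_tendsto_zero that j) auto
  from tendsto_diff[OF this[OF x] this[OF y]]
  have "(\<lambda>n. (W n (flip x0 x1 T j x) - W n x) - (W n (flip x0 x1 T j y) - W n y)) \<longlonglongrightarrow> 0"
    by simp
  moreover have "\<Delta> \<noteq> 0" unfolding \<Delta>_def using T_ge_2 by (intro flip_step_nonzero[OF x _ _ j]) auto
  ultimately show ?thesis unfolding eq by simp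
qed

lemma H_rel_tendsto_zero_step:
  assumes u: "1 \<le> u" "u < T"
    and later: "\<And>s i z. u \<le> s \<Longrightarrow> s \<le> T-1 \<Longrightarrow> 1 \<le> i \<Longrightarrow> i \<le> d \<Longrightarrow> z \<in> D
      \<Longrightarrow> (\<lambda>n. H_rel n s i (prefix d s z)) \<longlonglongrightarrow> 0"
    and x: "x \<in> D" and j: "1 \<le> j" "j \<le> d"
  shows "(\<lambda>n. (if 2 \<le> u then H n (u-1) j (prefix d (u-1) x) else 0) - anchor n j) \<longlonglongrightarrow> 0"
proof -
  define x' where "x' = flip x0 x1 u j x"
  have x': "x' \<in> D" unfolding x'_def using u by (intro flip_in_grid x j) auto
  have x'_T: "x' T = x T" using u by (simp add: x'_def flip_def)
  define \<Delta> where "\<Delta> = x' u j - x u j"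
  have shift: "gains d {u..T-1} (H_rel n) z
      = gains d {u..T-1} (H n) z - (\<Sum>i=1..d. anchor n i * (z T i - z u i))" for n z
    using gains_shift[of u T d "H n" "anchor n" z] u unfolding H_rel_def by simp
  have "(\<Sum>i=1..d. anchor n i * (x T i - x' u i)) - (\<Sum>i=1..d. anchor n i * (x T i - x u i)) = - anchor n j * \<Delta>" for n
    using j by (subst sum_diff_single_change) (auto simp: x'_def flip_def \<Delta>_def algebra_simps)
  moreover have "(if 2 \<le> u then H n (u-1) j (prefix d (u-1) x) * \<Delta> else 0)
      = (if 2 \<le> u then H n (u-1) j (prefix d (u-1) x) else 0) * \<Delta>" for n
    by simp
  ultimately have eq: "((if 2 \<le> u then H n (u-1) j (prefix d (u-1) x) else 0) - anchor n j) * \<Delta>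
      = (W n x' - W n x) - (gains d {u..T-1} (H_rel n) x' - gains d {u..T-1} (H_rel n) x)" for n
    using W_flip_diff[OF x u(1) _ j, of n] shift[of n x'] shift[of n x] u
    unfolding x'_def[symmetric] x'_T \<Delta>_def[symmetric] left_diff_distrib by fastforce
  have "(\<lambda>n. gains d {u..T-1} (H_rel n) z) \<longlonglongrightarrow> 0" if "z \<in> D" for z
    using later that by (intro gains_tendsto_zero) auto
  from tendsto_diff[OF flip_diff_tendsto_zero[OF x u(1) _ j] tendsto_diff[OF this[OF x'] this[OF x]]] u
  have "(\<lambda>n. ((if 2 \<le> u then H n (u-1) j (prefix d (u-1) x) else 0) - anchor n j) * \<Delta>) \<longlonglongrightarrow> 0"
    unfolding eq x'_def by simp
  moreover have "\<Delta> \<noteq> 0" unfolding \<Delta>_def x'_def using u by (intro flip_step_nonzero x j) auto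
  ultimately show ?thesis by simp
qed

lemma H_rel_tendsto_zero:
  assumes "1 \<le> s" "s \<le> T-1" "1 \<le> i" "i \<le> d" "x \<in> D"
  shows "(\<lambda>n. H_rel n s i (prefix d s x)) \<longlonglongrightarrow> 0"
proof -
  have "\<forall>s i x. 1 \<le> s \<and> u \<le> s \<and> s \<le> T-1 \<and> 1 \<le> i \<and> i \<le> d \<and> x \<in> D \<longrightarrow> (\<lambda>n. H_rel n s i (prefix d s x)) \<longlonglongrightarrow> 0"
    if "u \<le> T-1" for u
    using that
  proof (induction u rule: inc_induct)
    case base
    then show ?case using last_H_rel_tendsto_zero by (metis antisym)
  next
    case (step u)
    have "(\<lambda>n. H_rel n u i (prefix d u x)) \<longlonglongrightarrow> 0" if "1 \<le> u" "1 \<le> i" "i \<le> d" "x \<in> D" for i x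
      using H_rel_tendsto_zero_step[of "u+1" x i] step that by (auto simp: H_rel_def)
    then show ?case using step.IH by (metis le_antisym not_less_eq_eq)
  qed
  with assms show ?thesis by blast
qed

lemma anchor_tendsto_zero:
  assumes "1 \<le> i" "i \<le> d"
  shows "(\<lambda>n. anchor n i) \<longlonglongrightarrow> 0"
proof -
  have "(\<lambda>n. 0 - anchor n i) \<longlonglongrightarrow> 0"
    using H_rel_tendsto_zero_step[of 1 "prefix d T x0" i] H_rel_tendsto_zero prefix_in_grid T_ge_2 assms by simp
  then show ?thesis by (simp add: tendsto_minus_cancel_left[symmetric])
qed

lemma H_tendsto_zero:
  assumes "1 \<le> s" "s \<le> T-1" "1 \<le> i" "i \<le> d" "x \<in> D"
  shows "(\<lambda>n. H n s i (prefix d s x)) \<longlonglongrightarrow> 0"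
  using tendsto_add[OF H_rel_tendsto_zero[OF assms] anchor_tendsto_zero[OF assms(3,4)]] by (simp add: H_rel_def)

lemma G_tendsto_zero_normalised:
  assumes x: "x \<in> D" and j: "2 \<le> j" "j \<le> d"
  shows "(\<lambda>n. G n j (x T j)) \<longlonglongrightarrow> 0"
proof -
  define x' where "x' = flip x0 x1 T j x"
  have "(\<lambda>n. W n x' - W n x - H n (T-1) j (prefix d (T-1) x) * (x' T j - x T j)) \<longlonglongrightarrow> 0"
    unfolding x'_def using T_ge_2 j
    by (intro tendsto_diff_zero flip_diff_tendsto_zero tendsto_mult_left_zero H_tendsto_zero x) auto
  then have G_diff: "(\<lambda>n. G n j (x' T j) - G n j (x T j)) \<longlonglongrightarrow> 0"
    using W_flip_diff[OF x _ _ _ j(2), of T] T_ge_2 j unfolding x'_def[symmetric] by (simp add: gains_def)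
  consider "x T j = x0 T j" | "x' T j = x0 T j" using flip_hits_x0 unfolding x'_def by blast
  then show ?thesis
  proof cases
    case 1
    then show ?thesis using G_normalised[OF j] by simp
  next
    case 2
    then show ?thesis using tendsto_minus[OF G_diff] G_normalised[OF j] by simp
  qed
qed

lemma G_tendsto_zero:
  assumes x: "x \<in> D" and j: "1 \<le> j" "j \<le> d"
  shows "(\<lambda>n. G n j (x T j)) \<longlonglongrightarrow> 0"
proof (cases "j = 1")
  case True
  have "(\<lambda>n. W n x - gains d {1..T-1} (H n) x - (\<Sum>i=2..d. G n i (x T i))) \<longlonglongrightarrow> 0"
    by (intro tendsto_diff_zero W_tendsto_zero x gains_tendsto_zero tendsto_null_sum
        H_tendsto_zero G_tendsto_zero_normalised) auto
  moreover have "(\<Sum>i=1..d. G n i (x T i)) = G n 1 (x T 1) + (\<Sum>i=2..d. G n i (x T i))" for n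
    using d_pos by (simp add: sum.atLeast_Suc_atMost numeral_2_eq_2)
  ultimately show ?thesis using True by (simp add: W_repr[OF x] repr_eq_gains)
next
  case False
  with j show ?thesis by (intro G_tendsto_zero_normalised x) auto
qed

end

lemma repr_coeffs_tendsto:
  fixes V :: "point \<Rightarrow> real" and Vn :: "nat \<Rightarrow> point \<Rightarrow> real"
  assumes "1 \<le> d" "2 \<le> T"
    and "\<And>t j. 1 \<le> t \<Longrightarrow> t \<le> T \<Longrightarrow> 1 \<le> j \<Longrightarrow> j \<le> d \<Longrightarrow> x0 t j \<noteq> x1 t j"
    and "\<And>x. x \<in> grid T d x0 x1 \<Longrightarrow> V x = repr T d h g x"
    and "\<And>n x. x \<in> grid T d x0 x1 \<Longrightarrow> Vn n x = repr T d (hn n) (gn n) x"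
    and "\<And>j. 2 \<le> j \<Longrightarrow> j \<le> d \<Longrightarrow> g j (x0 T j) = 0"
    and "\<And>n j. 2 \<le> j \<Longrightarrow> j \<le> d \<Longrightarrow> gn n j (x0 T j) = 0"
    and "\<And>x. x \<in> grid T d x0 x1 \<Longrightarrow> (\<lambda>n. Vn n x) \<longlonglongrightarrow> V x"
    and x: "x \<in> grid T d x0 x1" and j: "1 \<le> j" "j \<le> d"
  shows "1 \<le> t \<Longrightarrow> t \<le> T - 1 \<Longrightarrow> (\<lambda>n. hn n t j (prefix d t x)) \<longlonglongrightarrow> h t j (prefix d t x)"
    and "(\<lambda>n. gn n j (x T j)) \<longlonglongrightarrow> g j (x T j)"
proof -
  interpret vanishing_representations T d x0 x1 "\<lambda>n x. Vn n x - V x"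
      "\<lambda>n t j p. hn n t j p - h t j p" "\<lambda>n j y. gn n j y - g j y"
  proof unfold_locales
    show "\<And>x. x \<in> grid T d x0 x1 \<Longrightarrow> (\<lambda>n. Vn n x - V x) \<longlonglongrightarrow> 0"
      by (rule LIM_zero[OF assms(8)])
  qed (use assms(1-7) in \<open>auto simp: repr_diff\<close>)
  show "1 \<le> t \<Longrightarrow> t \<le> T - 1 \<Longrightarrow> (\<lambda>n. hn n t j (prefix d t x)) \<longlonglongrightarrow> h t j (prefix d t x)"
    using H_tendsto_zero[OF _ _ j x] by (simp add: LIM_zero_iff)
  show "(\<lambda>n. gn n j (x T j)) \<longlonglongrightarrow> g j (x T j)"
    using G_tendsto_zero[OF x j] by (simp add: LIM_zero_iff)
qed

theorem proposition3p2:
  fixes T d :: nat and x0 x1 :: point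
    and V :: "point \<Rightarrow> real" and h :: "nat \<Rightarrow> nat \<Rightarrow> point \<Rightarrow> real" and g :: "nat \<Rightarrow> real \<Rightarrow> real"
    and Vn :: "nat \<Rightarrow> point \<Rightarrow> real" and hn :: "nat \<Rightarrow> nat \<Rightarrow> nat \<Rightarrow> point \<Rightarrow> real"
    and gn :: "nat \<Rightarrow> nat \<Rightarrow> real \<Rightarrow> real"
  assumes "d \<ge> 1" and "T \<ge> 2"
    and "\<And>t j. 1 \<le> t \<Longrightarrow> t \<le> T \<Longrightarrow> 1 \<le> j \<Longrightarrow> j \<le> d \<Longrightarrow> x0 t j \<noteq> x1 t j"
    and "\<And>x. x \<in> grid T d x0 x1 \<Longrightarrow> V x = repr T d h g x"
    and "\<And>n x. x \<in> grid T d x0 x1 \<Longrightarrow> Vn n x = repr T d (hn n) (gn n) x"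
    and "\<And>j. 2 \<le> j \<Longrightarrow> j \<le> d \<Longrightarrow> g j (x0 T j) = 0"
    and "\<And>n j. 2 \<le> j \<Longrightarrow> j \<le> d \<Longrightarrow> gn n j (x0 T j) = 0"
  shows "(\<forall>h' g'. (\<forall>x \<in> grid T d x0 x1. V x = repr T d h' g' x)
             \<and> (\<forall>j. 2 \<le> j \<and> j \<le> d \<longrightarrow> g' j (x0 T j) = 0)
           \<longrightarrow> (\<forall>x \<in> grid T d x0 x1.
                 (\<forall>t j. 1 \<le> t \<and> t \<le> T - 1 \<and> 1 \<le> j \<and> j \<le> d
                        \<longrightarrow> h' t j (prefix d t x) = h t j (prefix d t x))
               \<and> (\<forall>j. 1 \<le> j \<and> j \<le> d \<longrightarrow> g' j (x T j) = g j (x T j))))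
       \<and> ((\<forall>x \<in> grid T d x0 x1. (\<lambda>n. Vn n x) \<longlonglongrightarrow> V x)
           \<longrightarrow> (\<forall>x \<in> grid T d x0 x1.
                 (\<forall>t j. 1 \<le> t \<and> t \<le> T - 1 \<and> 1 \<le> j \<and> j \<le> d
                        \<longrightarrow> (\<lambda>n. hn n t j (prefix d t x)) \<longlonglongrightarrow> h t j (prefix d t x))
               \<and> (\<forall>j. 1 \<le> j \<and> j \<le> d \<longrightarrow> (\<lambda>n. gn n j (x T j)) \<longlonglongrightarrow> g j (x T j))))"
proof (intro conjI impI allI)
  \<comment> \<open>uniqueness is convergence for the constant sequence of representations\<close>
  fix h' g'
  assume alt: "(\<forall>x \<in> grid T d x0 x1. V x = repr T d h' g' x) \<and> (\<forall>j. 2 \<le> j \<and> j \<le> d \<longrightarrow> g' j (x0 T j) = 0)"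
  note limits = repr_coeffs_tendsto[of d T x0 x1 V h g "\<lambda>_. V" "\<lambda>_. h'" "\<lambda>_. g'"]
  have "(\<lambda>n. h' t j (prefix d t x)) \<longlonglongrightarrow> h t j (prefix d t x)"
    if "x \<in> grid T d x0 x1" "1 \<le> t" "t \<le> T - 1" "1 \<le> j" "j \<le> d" for x t j
    using limits(1) assms alt that by auto
  moreover have "(\<lambda>n. g' j (x T j)) \<longlonglongrightarrow> g j (x T j)"
    if "x \<in> grid T d x0 x1" "1 \<le> j" "j \<le> d" for x j
    using limits(2) assms alt that by auto
  ultimately show "\<forall>x \<in> grid T d x0 x1.
      (\<forall>t j. 1 \<le> t \<and> t \<le> T - 1 \<and> 1 \<le> j \<and> j \<le> d \<longrightarrow> h' t j (prefix d t x) = h t j (prefix d t x))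
      \<and> (\<forall>j. 1 \<le> j \<and> j \<le> d \<longrightarrow> g' j (x T j) = g j (x T j))"
    by (simp add: LIMSEQ_const_iff)
next
  assume "\<forall>x \<in> grid T d x0 x1. (\<lambda>n. Vn n x) \<longlonglongrightarrow> V x"
  with repr_coeffs_tendsto[of d T x0 x1 V h g Vn hn gn] assms
  show "\<forall>x \<in> grid T d x0 x1.
      (\<forall>t j. 1 \<le> t \<and> t \<le> T - 1 \<and> 1 \<le> j \<and> j \<le> d
        \<longrightarrow> (\<lambda>n. hn n t j (prefix d t x)) \<longlonglongrightarrow> h t j (prefix d t x))
      \<and> (\<forall>j. 1 \<le> j \<and> j \<le> d \<longrightarrow> (\<lambda>n. gn n j (x T j)) \<longlonglongrightarrow> g j (x T j))"
    by auto
qed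

end
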